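(* (i) There exists a doubly stochastic $2\times 2$ matrix $\mathcal N$ (for instance $\mathcal N=\frac19\begin{pmatrix}5&4\\4&5\end{pmatrix}$) such that for every $\kappa>\frac89$, no directed $3$-regular multigraph on $[2]$ has weak throughput at least $\kappa$ with respect to $\mathcal N$. (ii) For every positive integer $n$ there exists a doubly stochastic $n\times n$ matrix $\mathcal M_n$ such that no directed $(2n-1)$-regular multigraph on $[n]$ has weak direct throughput at least $\kappa$ with respect to $\mathcal M_n$, for every $\kappa>\frac{7n-4}{8n-4}$ if $n$ is even and for every $\kappa>\frac{7n-3}{8n-4}$ if $n$ is odd.
   Context: Let $n\ge 1$ and $[n]=\{1,\dots,n\}$. Networks are finite directed multigraphs on vertex set $[n]$; self-loops and parallel arcs are allowed. A directed multigraph is directed $r$-regular if every vertex has exactly $r$ outgoing and exactly $r$ incoming arcs (a self-loop at $v$ counts as one outgoing and one incoming arc of $v$). A path is a non-empty sequence of arcs $((u_1,v_1),\dots,(u_\ell,v_\ell))$ with $v_i=u_{i+1}$ for $i<\ell$; it goes from $u_1$ to $v_\ell$ and has length $\ell\ge 1$. An $n\times n$ matrix is doubly stochastic if all entries are nonnegative and every row and every column sums to $1$. In a directed $(2n-1)$-regular multigraph $G$ on $[n]$ every arc has capacity $\frac{1}{2n-1}$. $G$ hosts a nonnegative $n\times n$ matrix $\mathcal M=(a_{i,j})$ if there is a finite collection $\{(P_k,d_k)\}$, where each $P_k$ is a path in $G$ from some $s_k$ to some $t_k$ and $d_k\ge 0$, such that $\sum_{k:\,s_k=u,\,t_k=v}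 d_k=a_{u,v}$ for all $u,v\in[n]$, and for every arc $e$ of $G$ (parallel arcs are distinct) $\sum_{k:\,e\in P_k} d_k\le \frac{1}{2n-1}$. $G$ directly hosts $\mathcal M$ if this is possible with all paths $P_k$ of length $1$. For doubly stochastic $\mathcal M=(a_{i,j})$, the weak throughput (resp. weak direct throughput) of $G$ is the largest $\eta$ such that $G$ hosts (resp. directly hosts) some matrix $\mathcal M'=(a'_{i,j})$ with $0\le a'_{i,j}\le a_{i,j}$ for all $i,j$ and $\sum_{i,j}a'_{i,j}=\eta\sum_{i,j}a_{i,j}=\eta n$. *)

theory Defs
  imports Complex_Main
begin

text \<open>A directed multigraph on vertex set [n] = {1..n}: arcs are the indices 0..<narcs G,
  arc e goes from atail G e to ahead G e. Parallel arcs are distinct indices; self-loops allowed.\<close>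
record mgraph =
  narcs :: nat
  atail :: "nat \<Rightarrow> nat"
  ahead :: "nat \<Rightarrow> nat"

definition regular_multigraph :: "nat \<Rightarrow> nat \<Rightarrow> mgraph \<Rightarrow> bool" where
  "regular_multigraph n r G \<longleftrightarrow>
     (\<forall>e < narcs G. atail G e \<in> {1..n} \<and> ahead G e \<in> {1..n}) \<and>
     (\<forall>v \<in> {1..n}. card {e. e < narcs G \<and> atail G e = v} = r
                 \<and> card {e. e < narcs G \<and> ahead G e = v} = r)"

definition is_path :: "mgraph \<Rightarrow> nat list \<Rightarrow> bool" where
  "is_path G P \<longleftrightarrow> P \<noteq> [] \<and> set P \<subseteq> {..<narcs G} \<and>
     (\<forall>i. Suc i < length P \<longrightarrow> ahead G (P ! i) = atail G (P ! Suc i))"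

definition path_src :: "mgraph \<Rightarrow> nat list \<Rightarrow> nat" where
  "path_src G P = atail G (hd P)"

definition path_tgt :: "mgraph \<Rightarrow> nat list \<Rightarrow> nat" where
  "path_tgt G P = ahead G (last P)"

definition hosts :: "bool \<Rightarrow> nat \<Rightarrow> mgraph \<Rightarrow> (nat \<Rightarrow> nat \<Rightarrow> real) \<Rightarrow> bool" where
  "hosts direct n G A \<longleftrightarrow>
     (\<exists>L :: (nat list \<times> real) list.
        (\<forall>(P, d) \<in> set L. is_path G P \<and> d \<ge> 0 \<and> (direct \<longrightarrow> length P = 1)) \<and>
        (\<forall>u \<in> {1..n}. \<forall>v \<in> {1..n}.
           sum_list (map snd (filter (\<lambda>(P, d). path_src G P = u \<and> path_tgt G P = v) L)) = A u v) \<and>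
        (\<forall>e < narcs G.
           sum_list (map snd (filter (\<lambda>(P, d). e \<in> set P) L)) \<le> 1 / (2 * real n - 1)))"

definition doubly_stochastic :: "nat \<Rightarrow> (nat \<Rightarrow> nat \<Rightarrow> real) \<Rightarrow> bool" where
  "doubly_stochastic n A \<longleftrightarrow>
     (\<forall>i \<in> {1..n}. \<forall>j \<in> {1..n}. A i j \<ge> 0) \<and>
     (\<forall>i \<in> {1..n}. (\<Sum>j = 1..n. A i j) = 1) \<and>
     (\<forall>j \<in> {1..n}. (\<Sum>i = 1..n. A i j) = 1)"

definition throughput_achievable :: "bool \<Rightarrow> nat \<Rightarrow> mgraph \<Rightarrow> (nat \<Rightarrow> nat \<Rightarrow> real) \<Rightarrow> real \<Rightarrow> bool" where
  "throughput_achievable direct n G A \<eta> \<longleftrightarrow>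
     (\<exists>A'. (\<forall>i \<in> {1..n}. \<forall>j \<in> {1..n}. 0 \<le> A' i j \<and> A' i j \<le> A i j) \<and>
           hosts direct n G A' \<and>
           (\<Sum>i = 1..n. \<Sum>j = 1..n. A' i j) = \<eta> * (\<Sum>i = 1..n. \<Sum>j = 1..n. A i j))"

text \<open>Weak throughput (direct = False) / weak direct throughput (direct = True):
  the largest achievable \<eta>, taken as the supremum (the maximum is attained).\<close>
definition weak_throughput :: "bool \<Rightarrow> nat \<Rightarrow> mgraph \<Rightarrow> (nat \<Rightarrow> nat \<Rightarrow> real) \<Rightarrow> real" where
  "weak_throughput direct n G A = Sup {\<eta>. throughput_achievable direct n G A \<eta>}"

end

theory Submission
  imports Defs
begin

text \<open>With direct hosting, an entry (u, v) of a hosted matrix is at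
  most m/(2n - 1), where m is the number of arcs from u to v, and at most the entry of
  M = M_matrix n. Off the diagonal, and on it for even n, (2n - 1) M(u, v) = k + 1/2 with k
  an integer, and min(m, k + 1/2) <= (m + k)/2 falls 1/4 short of the average of the two
  bounds. Both bounds have row sums 2n - 1 after scaling, by regularity and double
  stochasticity, so a scaled row sum of the hosted matrix is at most 2n - 1 - n/4, or
  2n - 1 - (n - 1)/4 for odd n.

  On two vertices with a loops at each vertex and 3 - a arcs in each direction, a path from 1
  to 2 uses an arc from 1 to 2, and a path from a vertex to itself that avoids the loops there
  uses an arc in each direction. Weighing the demand of N_matrix against the loop capacity a/3
  and these cut capacities (3 - a)/3 bounds the hosted total by 16/9.\<close>

definition path_weight :: "(nat list \<times> real) list \<Rightarrow> (nat list \<Rightarrow> bool) \<Rightarrow> real" where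
  "path_weight L Q = sum_list (map snd (filter (\<lambda>(P, d). Q P) L))"

lemma path_weight_Nil [simp]: "path_weight [] Q = 0"
  by (simp add: path_weight_def)

lemma path_weight_Cons [simp]:
  "path_weight ((P, d) # L) Q = (if Q P then d else 0) + path_weight L Q"
  by (simp add: path_weight_def)

lemma path_weight_disj:
  assumes "\<And>P. \<not> (Q P \<and> R P)"
  shows "path_weight L (\<lambda>P. Q P \<or> R P) = path_weight L Q + path_weight L R"
  using assms by (induction L) auto

lemma path_weight_split:
  "path_weight L Q = path_weight L (\<lambda>P. Q P \<and> R P) + path_weight L (\<lambda>P. Q P \<and> \<not> R P)"
  by (induction L) auto

lemma path_weight_nonneg:
  assumes "\<forall>(P, d) \<in> set L. 0 \<le> d"
  shows "0 \<le> path_weight L Q"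
  using assms by (induction L) auto

lemma path_weight_le_cut:
  assumes "\<forall>(P, d) \<in> set L. 0 \<le> d \<and> (Q P \<longrightarrow> (\<exists>e \<in> T. e \<in> set P))" and "finite T"
  shows "path_weight L Q \<le> (\<Sum>e \<in> T. path_weight L (\<lambda>P. e \<in> set P))"
  using assms(1)
proof (induction L)
  case (Cons x L)
  obtain P d where x: "x = (P, d)" by fastforce
  have "(if Q P then d else 0) \<le> (\<Sum>e \<in> T. if e \<in> set P then d else 0)"
  proof (cases "Q P")
    case True
    then obtain e where "e \<in> T" "e \<in> set P" using Cons.prems x by auto
    then show ?thesis
      using True Cons.prems x member_le_sum[of e T "\<lambda>e. if e \<in> set P then d else 0"] \<open>finite T\<close>
      by auto
  qed (use Cons.prems x in \<open>auto intro: sum_nonneg\<close>)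
  then show ?case using Cons by (simp add: x sum.distrib)
qed simp

lemma hosts_iff_path_weight:
  "hosts direct n G A \<longleftrightarrow>
     (\<exists>L. (\<forall>(P, d) \<in> set L. is_path G P \<and> 0 \<le> d \<and> (direct \<longrightarrow> length P = 1)) \<and>
          (\<forall>u \<in> {1..n}. \<forall>v \<in> {1..n}.
             path_weight L (\<lambda>P. path_src G P = u \<and> path_tgt G P = v) = A u v) \<and>
          (\<forall>e < narcs G. path_weight L (\<lambda>P. e \<in> set P) \<le> 1 / (2 * real n - 1)))"
  unfolding hosts_def path_weight_def ..

lemma weak_throughput_le:
  assumes "n \<ge> 1" and A: "doubly_stochastic n A"
    and bound: "\<And>A'. \<forall>i \<in> {1..n}. \<forall>j \<in> {1..n}. 0 \<le> A' i j \<and> A' i j \<le> A i j \<Longrightarrow>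
                  hosts direct n G A' \<Longrightarrow> (\<Sum>i = 1..n. \<Sum>j = 1..n. A' i j) \<le> B * real n"
  shows "weak_throughput direct n G A \<le> B"
  unfolding weak_throughput_def
proof (rule cSup_least)
  have "hosts direct n G (\<lambda>_ _. 0)"
    unfolding hosts_iff_path_weight using \<open>n \<ge> 1\<close> by (intro exI[of _ "[]"]) auto
  then show "{\<eta>. throughput_achievable direct n G A \<eta>} \<noteq> {}"
    using A unfolding throughput_achievable_def doubly_stochastic_def by force
next
  have total: "(\<Sum>i = 1..n. \<Sum>j = 1..n. A i j) = real n"
    using A unfolding doubly_stochastic_def by simp
  fix \<eta> assume "\<eta> \<in> {\<eta>. throughput_achievable direct n G A \<eta>}"
  then obtain A' where "\<forall>i \<in> {1..n}. \<forall>j \<in> {1..n}. 0 \<le> A' i j \<and> A' i j \<le> A i j"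
    "hosts direct n G A'" "(\<Sum>i = 1..n. \<Sum>j = 1..n. A' i j) = \<eta> * real n"
    unfolding throughput_achievable_def total by auto
  then have "\<eta> * real n \<le> B * real n"
    using bound by metis
  then show "\<eta> \<le> B" using \<open>n \<ge> 1\<close> by simp
qed

lemma sum_if_eq_diagonal:
  assumes "u \<in> {1..n}"
  shows "(\<Sum>v = 1..n. if v = u then a else b) = a + (real n - 1) * b"
    and "(\<Sum>v = 1..n. if u = v then a else b) = a + (real n - 1) * b"
proof -
  have "card ({1..n} - {u}) = n - 1" using assms by simp
  then show *: "(\<Sum>v = 1..n. if v = u then a else b) = a + (real n - 1) * b"
    using assms by (simp add: sum.delta_remove of_nat_diff)
  show "(\<Sum>v = 1..n. if u = v then a else b) = a + (real n - 1) * b"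
    by (subst *[symmetric]) (rule sum.cong, auto)
qed

lemma doubly_stochastic_diagonal:
  assumes "0 \<le> a" "0 \<le> b" "a + (real n - 1) * b = 1"
  shows "doubly_stochastic n (\<lambda>i j. if i = j then a else b)"
  using assms sum_if_eq_diagonal[of _ n a b] unfolding doubly_stochastic_def by simp

definition arcs_between :: "mgraph \<Rightarrow> nat \<Rightarrow> nat \<Rightarrow> nat set" where
  "arcs_between G u v = {e. e < narcs G \<and> atail G e = u \<and> ahead G e = v}"

definition traverses :: "mgraph \<Rightarrow> nat \<Rightarrow> nat \<Rightarrow> nat list \<Rightarrow> bool" where
  "traverses G u v P \<longleftrightarrow> (\<exists>e \<in> set P. e \<in> arcs_between G u v)"

lemma path_weight_le_arcs_between:
  assumes "\<forall>(P, d) \<in> set L. 0 \<le> d \<and> (Q P \<longrightarrow> traverses G u v P)"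
    and "\<forall>e < narcs G. path_weight L (\<lambda>P. e \<in> set P) \<le> c"
  shows "path_weight L Q \<le> real (card (arcs_between G u v)) * c"
proof -
  have "path_weight L Q \<le> (\<Sum>e \<in> arcs_between G u v. path_weight L (\<lambda>P. e \<in> set P))"
    by (rule path_weight_le_cut) (use assms(1) in \<open>auto simp: traverses_def arcs_between_def\<close>)
  also have "\<dots> \<le> real (card (arcs_between G u v)) * c"
    by (rule sum_bounded_above) (use assms(2) in \<open>auto simp: arcs_between_def\<close>)
  finally show ?thesis .
qed

lemma regular_multigraph_degrees:
  assumes "regular_multigraph n r G" "u \<in> {1..n}"
  shows "(\<Sum>v = 1..n. card (arcs_between G u v)) = r"
    and "(\<Sum>v = 1..n. card (arcs_between G v u)) = r"
proof -
  have "{e. e < narcs G \<and> atail G e = u} = (\<Union>v \<in> {1..n}. arcs_between G u v)"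
    and "{e. e < narcs G \<and> ahead G e = u} = (\<Union>v \<in> {1..n}. arcs_between G v u)"
    using assms(1) unfolding regular_multigraph_def arcs_between_def by auto
  moreover have "card (\<Union>v \<in> {1..n}. arcs_between G u v) = (\<Sum>v = 1..n. card (arcs_between G u v))"
    and "card (\<Union>v \<in> {1..n}. arcs_between G v u) = (\<Sum>v = 1..n. card (arcs_between G v u))"
    by (rule card_UN_disjoint; auto simp: arcs_between_def)+
  ultimately show "(\<Sum>v = 1..n. card (arcs_between G u v)) = r"
    and "(\<Sum>v = 1..n. card (arcs_between G v u)) = r"
    using assms unfolding regular_multigraph_def by metis+
qed

lemma is_path_Cons:
  "is_path G (e # P) \<longleftrightarrow>
     e < narcs G \<and> (P = [] \<or> is_path G P \<and> ahead G e = atail G (hd P))"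
proof (cases P)
  case (Cons p P')
  have "(\<forall>i. Suc i < length (e # P) \<longrightarrow> ahead G ((e # P) ! i) = atail G ((e # P) ! Suc i)) \<longleftrightarrow>
        ahead G e = atail G p \<and> (\<forall>i. Suc i < length P \<longrightarrow> ahead G (P ! i) = atail G (P ! Suc i))"
    using All_less_Suc2[of "length P'" "\<lambda>i. ahead G ((e # P) ! i) = atail G (P ! i)"]
    by (auto simp: Cons)
  then show ?thesis using Cons unfolding is_path_def by auto
qed (simp add: is_path_def)

lemma path_leaves_source:
  assumes "is_path G P" "path_src G P = u" "path_tgt G P \<noteq> u"
  shows "\<exists>e \<in> set P. atail G e = u \<and> ahead G e \<noteq> u"
  using assms
proof (induction P)
  case (Cons e P)
  show ?case
  proof (cases "ahead G e = u")
    case True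
    then have "P \<noteq> []" using Cons.prems(3) by (auto simp: path_tgt_def)
    then have "is_path G P" "path_src G P = u" "path_tgt G P \<noteq> u"
      using Cons.prems True by (auto simp: is_path_Cons path_src_def path_tgt_def)
    then show ?thesis using Cons.IH by auto
  qed (use Cons.prems(2) in \<open>auto simp: path_src_def\<close>)
qed (simp add: is_path_def)

lemma two_vertex_path_traverses:
  assumes P: "is_path G P"
    and ends: "\<forall>e < narcs G. atail G e \<in> {u, w} \<and> ahead G e \<in> {u, w}"
  shows "path_src G P = u \<Longrightarrow> path_tgt G P = w \<Longrightarrow> u \<noteq> w \<Longrightarrow> traverses G u w P"
    and "path_src G P = u \<Longrightarrow> path_tgt G P = u \<Longrightarrow> \<not> traverses G u u P \<Longrightarrow>
           traverses G u w P \<and> traverses G w u P"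
proof -
  have arcs: "e < narcs G" if "e \<in> set P" for e
    using P that unfolding is_path_def by auto
  show "traverses G u w P" if "path_src G P = u" "path_tgt G P = w" "u \<noteq> w"
    using path_leaves_source[OF P that(1)] that(2,3) ends arcs
    unfolding traverses_def arcs_between_def by fastforce
  assume src: "path_src G P = u" and tgt: "path_tgt G P = u" and no_loop: "\<not> traverses G u u P"
  have "hd P \<in> set P" "last P \<in> set P"
    using P unfolding is_path_def by auto
  then have "ahead G (hd P) \<noteq> u" "atail G (last P) \<noteq> u"
    using src tgt no_loop arcs
    unfolding traverses_def arcs_between_def path_src_def path_tgt_def by auto
  then have "hd P \<in> arcs_between G u w" "last P \<in> arcs_between G w u"
    using src tgt ends arcs[OF \<open>hd P \<in> set P\<close>] arcs[OF \<open>last P \<in> set P\<close>]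
    unfolding arcs_between_def path_src_def path_tgt_def by auto
  then show "traverses G u w P \<and> traverses G w u P"
    using \<open>hd P \<in> set P\<close> \<open>last P \<in> set P\<close> unfolding traverses_def by auto
qed

lemma two_vertex_cut:
  assumes L: "\<forall>(P, d) \<in> set L. is_path G P \<and> 0 \<le> d"
    and ends: "\<forall>e < narcs G. atail G e \<in> {u, w} \<and> ahead G e \<in> {u, w}" and "u \<noteq> w"
    and cap: "\<forall>e < narcs G. path_weight L (\<lambda>P. e \<in> set P) \<le> c"
  shows "path_weight L (\<lambda>P. path_src G P = u \<and> path_tgt G P = w)
       + path_weight L (\<lambda>P. (path_src G P = u \<and> path_tgt G P = u) \<and> \<not> traverses G u u P)
       + path_weight L (\<lambda>P. (path_src G P = w \<and> path_tgt G P = w) \<and> \<not> traverses G w w P)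
       \<le> real (card (arcs_between G u w)) * c"
proof -
  have ends': "\<forall>e < narcs G. atail G e \<in> {w, u} \<and> ahead G e \<in> {w, u}"
    using ends by auto
  let ?Q = "\<lambda>P. (path_src G P = u \<and> path_tgt G P = w)
      \<or> ((path_src G P = u \<and> path_tgt G P = u) \<and> \<not> traverses G u u P)
      \<or> ((path_src G P = w \<and> path_tgt G P = w) \<and> \<not> traverses G w w P)"
  have "path_weight L ?Q \<le> real (card (arcs_between G u w)) * c"
  proof (rule path_weight_le_arcs_between[OF _ cap])
    show "\<forall>(P, d) \<in> set L. 0 \<le> d \<and> (?Q P \<longrightarrow> traverses G u w P)"
      using L two_vertex_path_traverses[OF _ ends] two_vertex_path_traverses(2)[OF _ ends']
        \<open>u \<noteq> w\<close> by fastforce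
  qed
  moreover have "path_weight L ?Q =
      path_weight L (\<lambda>P. path_src G P = u \<and> path_tgt G P = w)
       + path_weight L (\<lambda>P. (path_src G P = u \<and> path_tgt G P = u) \<and> \<not> traverses G u u P)
       + path_weight L (\<lambda>P. (path_src G P = w \<and> path_tgt G P = w) \<and> \<not> traverses G w w P)"
    using \<open>u \<noteq> w\<close> by (simp add: path_weight_disj)
  ultimately show ?thesis by simp
qed

text \<open>The bound needs a to be an integer: with a = 3/2 the hypotheses admit the total 17/9.\<close>

lemma two_vertex_demand_bound:
  fixes a :: nat and y11 y12 y21 y22 q1 q2 :: real
  assumes "y11 \<le> real a / 3 + q1" "y22 \<le> real a / 3 + q2" "0 \<le> q1" "0 \<le> q2"
    and "y12 + q1 + q2 \<le> (3 - real a) / 3" "y21 + q1 + q2 \<le> (3 - real a) / 3"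
    and "y11 \<le> 5/9" "y22 \<le> 5/9" "y12 \<le> 4/9" "y21 \<le> 4/9"
  shows "y11 + y12 + y21 + y22 \<le> 16/9"
proof (cases "a \<le> 1")
  case True
  then have "real a \<le> 1" by simp
  then show ?thesis using assms by (simp add: field_simps)
next
  case False
  then have "real a \<ge> 2" by simp
  then show ?thesis using assms by (simp add: field_simps)
qed

lemma two_vertex_regular_arc_counts:
  assumes "regular_multigraph 2 r G"
  shows "card (arcs_between G 1 1) + card (arcs_between G 1 2) = r"
    and "card (arcs_between G 1 1) + card (arcs_between G 2 1) = r"
    and "card (arcs_between G 2 2) = card (arcs_between G 1 1)"
proof -
  have "card (arcs_between G 2 1) + card (arcs_between G 2 2) = r"
    using regular_multigraph_degrees(1)[OF assms, of 2] by (simp add: numeral_2_eq_2)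
  moreover show "card (arcs_between G 1 1) + card (arcs_between G 1 2) = r"
    and "card (arcs_between G 1 1) + card (arcs_between G 2 1) = r"
    using regular_multigraph_degrees[OF assms, of 1] by (simp_all add: numeral_2_eq_2)
  ultimately show "card (arcs_between G 2 2) = card (arcs_between G 1 1)" by linarith
qed

definition N_matrix :: "nat \<Rightarrow> nat \<Rightarrow> real" where
  "N_matrix i j = (if i = j then 5/9 else 4/9)"

lemma N_matrix_doubly_stochastic: "doubly_stochastic 2 N_matrix"
  unfolding N_matrix_def[abs_def] by (rule doubly_stochastic_diagonal) auto

lemma two_vertex_hosted_total_le:
  assumes G: "regular_multigraph 2 3 G" and host: "hosts False 2 G A"
    and le: "\<forall>i \<in> {1..2}. \<forall>j \<in> {1..2}. 0 \<le> A i j \<and> A i j \<le> N_matrix i j"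
  shows "(\<Sum>i = 1..2. \<Sum>j = 1..2. A i j) \<le> 16/9"
proof -
  obtain L where L: "\<forall>(P, d) \<in> set L. is_path G P \<and> 0 \<le> d"
    and flow: "\<forall>u \<in> {1..2}. \<forall>v \<in> {1..2}.
                 path_weight L (\<lambda>P. path_src G P = u \<and> path_tgt G P = v) = A u v"
    and cap: "\<forall>e < narcs G. path_weight L (\<lambda>P. e \<in> set P) \<le> 1/3"
    using host unfolding hosts_iff_path_weight by (auto simp: case_prod_unfold)
  have nonneg: "\<forall>(P, d) \<in> set L. 0 \<le> d"
    using L by auto
  have ends: "\<forall>e < narcs G. atail G e \<in> {1, 2} \<and> ahead G e \<in> {1, 2}"
    using G unfolding regular_multigraph_def by auto
  define a where "a = card (arcs_between G 1 1)"
  have card12: "real (card (arcs_between G 1 2)) = 3 - real a"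
    and card21: "real (card (arcs_between G 2 1)) = 3 - real a"
    and card22: "card (arcs_between G 2 2) = a"
    using two_vertex_regular_arc_counts[OF G] unfolding a_def by linarith+
  define loop where
    "loop u = path_weight L (\<lambda>P. (path_src G P = u \<and> path_tgt G P = u) \<and> traverses G u u P)" for u
  define loopfree where
    "loopfree u = path_weight L (\<lambda>P. (path_src G P = u \<and> path_tgt G P = u) \<and> \<not> traverses G u u P)" for u
  have split: "A u u = loop u + loopfree u" if "u \<in> {1..2}" for u
    using flow that path_weight_split unfolding loop_def loopfree_def by metis
  have loop_le: "loop u \<le> real (card (arcs_between G u u)) / 3" for u
    unfolding loop_def using path_weight_le_arcs_between[OF _ cap] nonneg by auto
  have loopfree_nonneg: "0 \<le> loopfree u" for u
    unfolding loopfree_def by (rule path_weight_nonneg[OF nonneg])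
  have cut12: "A 1 2 + loopfree 1 + loopfree 2 \<le> (3 - real a) / 3"
    and cut21: "A 2 1 + loopfree 1 + loopfree 2 \<le> (3 - real a) / 3"
    using two_vertex_cut[OF L ends _ cap] two_vertex_cut[OF L _ _ cap, of 2 1] ends flow
    unfolding loopfree_def card12 card21 by (auto simp: insert_commute)
  have "A 1 1 \<le> 5/9" "A 2 2 \<le> 5/9" "A 1 2 \<le> 4/9" "A 2 1 \<le> 4/9"
    using le[rule_format, of 1 1] le[rule_format, of 2 2] le[rule_format, of 1 2]
      le[rule_format, of 2 1]
    unfolding N_matrix_def by auto
  then have "A 1 1 + A 1 2 + A 2 1 + A 2 2 \<le> 16/9"
    using two_vertex_demand_bound[of "A 1 1" a "loopfree 1" "A 2 2" "loopfree 2" "A 1 2" "A 2 1"]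
      split[of 1] split[of 2] loop_le[of 1] loop_le[of 2] loopfree_nonneg[of 1]
      loopfree_nonneg[of 2] cut12 cut21
    by (simp add: a_def card22)
  then show ?thesis by (simp add: numeral_2_eq_2)
qed

definition M_matrix :: "nat \<Rightarrow> nat \<Rightarrow> nat \<Rightarrow> real" where
  "M_matrix n i j =
     (if i = j then (3 * real n - 1) / (2 * (2 * real n - 1)) else 1 / (2 * (2 * real n - 1)))"

lemma M_matrix_doubly_stochastic:
  assumes "n \<ge> 1"
  shows "doubly_stochastic n (M_matrix n)"
  unfolding M_matrix_def[abs_def]
  by (rule doubly_stochastic_diagonal)
    (use assms in \<open>simp_all add: add_divide_distrib[symmetric] divide_eq_1_iff\<close>)

lemma direct_hosting_entry_le:
  assumes host: "hosts True n G A" and u: "u \<in> {1..n}" and v: "v \<in> {1..n}"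
  shows "(2 * real n - 1) * A u v \<le> real (card (arcs_between G u v))"
proof -
  obtain L where L: "\<forall>(P, d) \<in> set L. is_path G P \<and> 0 \<le> d \<and> length P = 1"
    and flow: "path_weight L (\<lambda>P. path_src G P = u \<and> path_tgt G P = v) = A u v"
    and cap: "\<forall>e < narcs G. path_weight L (\<lambda>P. e \<in> set P) \<le> 1 / (2 * real n - 1)"
    using host u v unfolding hosts_iff_path_weight by blast
  have "traverses G u v P"
    if "is_path G P" "length P = 1" "path_src G P = u" "path_tgt G P = v" for P
  proof -
    obtain e where P: "P = [e]" using \<open>length P = 1\<close> by (cases P) auto
    then have "e \<in> arcs_between G u v"
      using that unfolding is_path_def path_src_def path_tgt_def arcs_between_def by simp
    then show ?thesis unfolding P traverses_def by simp
  qed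
  then have weights: "\<forall>(P, d) \<in> set L.
      0 \<le> d \<and> (path_src G P = u \<and> path_tgt G P = v \<longrightarrow> traverses G u v P)"
    using L by auto
  have "A u v \<le> real (card (arcs_between G u v)) * (1 / (2 * real n - 1))"
    using path_weight_le_arcs_between[OF weights cap] flow by simp
  moreover have "2 * real n - 1 > 0" using u by auto
  ultimately show ?thesis by (simp add: pos_le_divide_eq mult.commute)
qed

lemma twice_le_of_nat_add_half:
  fixes x :: real and m k :: nat
  assumes "x \<le> real m" "x \<le> real k + 1/2"
  shows "2 * x \<le> real m + real k"
proof (cases "m \<le> k")
  case False
  then have "real k + 1 \<le> real m" by simp
  then show ?thesis using assms by linarith
qed (use assms in linarith)

lemma M_matrix_hosted_entry_le:
  assumes host: "hosts True n G A" and u: "u \<in> {1..n}" and v: "v \<in> {1..n}"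
    and le: "A u v \<le> M_matrix n u v"
  shows "2 * (2 * real n - 1) * A u v
           \<le> real (card (arcs_between G u v)) + (2 * real n - 1) * M_matrix n u v
              - (if v = u \<and> odd n then 0 else 1/2)"
proof -
  define r where "r = 2 * real n - 1"
  have r: "r \<ge> 1" using u unfolding r_def by auto
  have by_arcs: "r * A u v \<le> real (card (arcs_between G u v))"
    using direct_hosting_entry_le[OF host u v] unfolding r_def .
  have by_demand: "r * A u v \<le> r * M_matrix n u v"
    using le r by (simp add: mult_left_mono)
  consider "v \<noteq> u" | "v = u" "even n" | "v = u" "odd n" by blast
  then show ?thesis
  proof cases
    case 1
    then have "r * M_matrix n u v = real 0 + 1/2"
      using r unfolding M_matrix_def r_def by simp
    then show ?thesis
      using twice_le_of_nat_add_half[OF by_arcs, of 0] by_demand 1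
      unfolding r_def[symmetric] by (simp add: mult.assoc)
  next
    case 2
    then obtain t where t: "n = 2 * t" "t \<ge> 1" using u by auto
    have "r * M_matrix n u v = (3 * real n - 1) / 2"
      using 2 r unfolding M_matrix_def r_def[symmetric] by simp
    also have "\<dots> = real (3 * t - 1) + 1/2"
      using t by (simp add: of_nat_diff)
    finally show ?thesis
      using twice_le_of_nat_add_half[OF by_arcs, of "3 * t - 1"] by_demand 2
      unfolding r_def[symmetric] by (simp add: mult.assoc)
  next
    case 3
    then show ?thesis using by_arcs by_demand unfolding r_def[symmetric] by simp
  qed
qed

lemma M_matrix_hosted_row_le:
  assumes G: "regular_multigraph n (2 * n - 1) G" and host: "hosts True n G A"
    and u: "u \<in> {1..n}" and le: "\<forall>v \<in> {1..n}. A u v \<le> M_matrix n u v"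
  shows "4 * (2 * real n - 1) * (\<Sum>v = 1..n. A u v)
           \<le> 4 * (2 * real n - 1) - (if even n then real n else real n - 1)"
proof -
  define r where "r = 2 * real n - 1"
  define slack :: "nat \<Rightarrow> real" where
    "slack v = (if v = u then (if odd n then 0 else 1/2) else 1/2)" for v
  have "2 * r * (\<Sum>v = 1..n. A u v) = (\<Sum>v = 1..n. 2 * r * A u v)"
    by (simp add: sum_distrib_left)
  also have "\<dots> \<le> (\<Sum>v = 1..n. real (card (arcs_between G u v)) + r * M_matrix n u v - slack v)"
  proof (rule sum_mono)
    fix v assume v: "v \<in> {1..n}"
    have "(if v = u \<and> odd n then 0 else 1/2) = slack v"
      unfolding slack_def by simp
    then show "2 * r * A u v \<le> real (card (arcs_between G u v)) + r * M_matrix n u v - slack v"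
      using M_matrix_hosted_entry_le[OF host u v] le v unfolding r_def by simp
  qed
  also have "\<dots> = real (\<Sum>v = 1..n. card (arcs_between G u v))
                   + r * (\<Sum>v = 1..n. M_matrix n u v) - (\<Sum>v = 1..n. slack v)"
    by (simp add: sum.distrib sum_subtractf sum_distrib_left)
  also have "\<dots> = 2 * r - ((if odd n then 0 else 1/2) + (real n - 1) / 2)"
    using regular_multigraph_degrees(1)[OF G u] M_matrix_doubly_stochastic u
      sum_if_eq_diagonal(1)[OF u, of "if odd n then 0 else 1/2" "1/2"]
    unfolding slack_def doubly_stochastic_def r_def by (simp add: of_nat_diff)
  finally show ?thesis
    unfolding r_def[symmetric] by (cases "even n") (simp_all add: field_simps)
qed

lemma M_matrix_hosted_total_le:
  assumes G: "regular_multigraph n (2 * n - 1) G" and host: "hosts True n G A"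
    and n: "n \<ge> 1" and le: "\<forall>i \<in> {1..n}. \<forall>j \<in> {1..n}. 0 \<le> A i j \<and> A i j \<le> M_matrix n i j"
  shows "(\<Sum>i = 1..n. \<Sum>j = 1..n. A i j)
           \<le> (if even n then (7 * real n - 4) / (8 * real n - 4)
                        else (7 * real n - 3) / (8 * real n - 4)) * real n"
proof -
  define e where "e = (if even n then real n else real n - 1)"
  have "(8 * real n - 4) * (\<Sum>i = 1..n. \<Sum>j = 1..n. A i j)
          = (\<Sum>i = 1..n. 4 * (2 * real n - 1) * (\<Sum>j = 1..n. A i j))"
    by (simp add: sum_distrib_left algebra_simps)
  also have "\<dots> \<le> (\<Sum>i = 1..n. 4 * (2 * real n - 1) - e)"
    by (rule sum_mono) (use M_matrix_hosted_row_le[OF G host] le in \<open>auto simp: e_def\<close>)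
  also have "\<dots> = (8 * real n - 4 - e) * real n"
    by (simp add: algebra_simps)
  finally have "(8 * real n - 4) * (\<Sum>i = 1..n. \<Sum>j = 1..n. A i j) \<le> (8 * real n - 4 - e) * real n" .
  moreover have "8 * real n - 4 > 0" using n by simp
  ultimately show ?thesis
    unfolding e_def by (cases "even n") (simp_all add: pos_le_divide_eq divide_simps algebra_simps)
qed

theorem proposition4p4:
  shows "(\<exists>N. doubly_stochastic 2 N \<and>
            (\<forall>\<kappa>::real. \<kappa> > 8 / 9 \<longrightarrow>
               (\<forall>G. regular_multigraph 2 3 G \<longrightarrow> \<not> weak_throughput False 2 G N \<ge> \<kappa>)))
       \<and> (\<forall>n::nat. n \<ge> 1 \<longrightarrow>
            (\<exists>M. doubly_stochastic n M \<and>
               (\<forall>\<kappa>::real.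
                  \<kappa> > (if even n then (7 * real n - 4) / (8 * real n - 4)
                               else (7 * real n - 3) / (8 * real n - 4)) \<longrightarrow>
                  (\<forall>G. regular_multigraph n (2 * n - 1) G \<longrightarrow>
                        \<not> weak_throughput True n G M \<ge> \<kappa>))))"
proof -
  have N: "weak_throughput False 2 G N_matrix \<le> 8 / 9" if "regular_multigraph 2 3 G" for G
    by (rule weak_throughput_le[OF _ N_matrix_doubly_stochastic])
      (use two_vertex_hosted_total_le[OF that] in auto)
  have M: "weak_throughput True n G (M_matrix n)
             \<le> (if even n then (7 * real n - 4) / (8 * real n - 4)
                          else (7 * real n - 3) / (8 * real n - 4))"
    if "n \<ge> 1" "regular_multigraph n (2 * n - 1) G" for n G
    using weak_throughput_le[OF that(1) M_matrix_doubly_stochastic[OF that(1)]]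
      M_matrix_hosted_total_le[OF that(2) _ that(1)] by blast
  show ?thesis
    using N M N_matrix_doubly_stochastic M_matrix_doubly_stochastic
    by (meson not_le order.strict_trans1)
qed

end
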